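(* Let $m$ be a positive integer. If $C$ is a ternary extremal self-dual code of length $12m$, then $B_{3i}\equiv 0 \pmod 8$ for every $i=m+1,m+2,\ldots,4m$, where $B_{j}$ denotes the number of codewords of weight $j$ in $C$.
   Context: A ternary code of length $n$ is a linear subspace of $\mathbb{F}_3^n$; it is self-dual if it equals its dual with respect to the standard inner product $\sum_k x_k y_k$. The weight of a vector is the number of its nonzero coordinates. A ternary self-dual code of length $n$ is extremal if its minimum (nonzero) weight equals $3\lfloor n/12\rfloor+3$; for length $12m$ this is $3m+3$. *)

theory Defs
  imports "HOL-Library.Numeral_Type"
begin

text \<open>The field F_3 is represented by the numeral type 3 (integers mod 3).
  A word of length n is a function nat to 3 vanishing outside {..<n}.\<close>

definition words :: "nat \<Rightarrow> (nat \<Rightarrow> 3) set" where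
  "words n = {x. \<forall>k\<ge>n. x k = 0}"

definition ternary_code :: "nat \<Rightarrow> (nat \<Rightarrow> 3) set \<Rightarrow> bool" where
  "ternary_code n C \<longleftrightarrow> C \<subseteq> words n \<and> (\<lambda>_. 0) \<in> C \<and>
     (\<forall>x\<in>C. \<forall>y\<in>C. (\<lambda>k. x k + y k) \<in> C) \<and>
     (\<forall>a::3. \<forall>x\<in>C. (\<lambda>k. a * x k) \<in> C)"

definition inner3 :: "nat \<Rightarrow> (nat \<Rightarrow> 3) \<Rightarrow> (nat \<Rightarrow> 3) \<Rightarrow> 3" where
  "inner3 n x y = (\<Sum>k<n. x k * y k)"

definition dual_code :: "nat \<Rightarrow> (nat \<Rightarrow> 3) set \<Rightarrow> (nat \<Rightarrow> 3) set" where
  "dual_code n C = {y \<in> words n. \<forall>x\<in>C. inner3 n x y = 0}"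

definition self_dual :: "nat \<Rightarrow> (nat \<Rightarrow> 3) set \<Rightarrow> bool" where
  "self_dual n C \<longleftrightarrow> ternary_code n C \<and> dual_code n C = C"

definition wt :: "nat \<Rightarrow> (nat \<Rightarrow> 3) \<Rightarrow> nat" where
  "wt n x = card {k. k < n \<and> x k \<noteq> 0}"

definition min_weight :: "nat \<Rightarrow> (nat \<Rightarrow> 3) set \<Rightarrow> nat" where
  "min_weight n C = Min (wt n ` (C - {\<lambda>_. 0}))"

definition extremal :: "nat \<Rightarrow> (nat \<Rightarrow> 3) set \<Rightarrow> bool" where
  "extremal n C \<longleftrightarrow> self_dual n C \<and> min_weight n C = 3 * (n div 12) + 3"

definition weight_count :: "nat \<Rightarrow> (nat \<Rightarrow> 3) set \<Rightarrow> nat \<Rightarrow> nat" where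
  "weight_count n C j = card {x \<in> C. wt n x = j}"

end

theory Submission
  imports Defs "HOL-Library.FuncSet" "HOL-Computational_Algebra.Polynomial"
begin

text \<open>The complement of an information set of a self-dual code is again an information set, so
  a self-dual ternary code C of length 12m has 3^(6m) words. If C did not project onto a set S of
  v < 3m + 3 coordinates, some nonzero word supported on S would be orthogonal to C, hence a
  codeword of weight at most v; so C projects onto S and exactly 3^(6m - v) codewords vanish on S.
  Counting pairs (x, S) with x vanishing on S gives
  sum_x binom(12m - wt x, v) = binom(12m, v) 3^(6m - v). All nonzero weights have the form
  12m - 3t with t < 3m, so for v < 3m
  sum_t B_(12m-3t) binom(3t, v) = binom(12m, v) (3^(6m - v) - 1), which is divisible by 8:
  for odd v because 4 divides binom(12m, v), for even v because 3^2 = 1 mod 8. Finally the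
  matrix (binom(3t, v)) for t, v < 3m is invertible over Z/8: it is the product of the
  unitriangular matrix (binom(t, j)) and a triangular matrix with diagonal entries 3^j.\<close>

section \<open>Linear ternary codes\<close>

lemma F3_cases: "(x::3) = 0 \<or> x = 1 \<or> x = 2"
proof (induct x)
  case (of_int z)
  then have "z = 0 \<or> z = 1 \<or> z = 2" by auto
  then show ?case by auto
qed

lemma F3_square_nonzero: "(x::3) \<noteq> 0 \<Longrightarrow> x * x = 1"
  using F3_cases[of x] by auto

definition words_on :: "nat set \<Rightarrow> (nat \<Rightarrow> 3) set" where
  "words_on S = {x. \<forall>k. k \<notin> S \<longrightarrow> x k = 0}"

definition projects_onto :: "nat set \<Rightarrow> (nat \<Rightarrow> 3) set \<Rightarrow> bool" where
  "projects_onto S C \<longleftrightarrow> (\<forall>v. \<exists>x\<in>C. \<forall>k\<in>S. x k = v k)"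

definition vanishing_on :: "nat set \<Rightarrow> (nat \<Rightarrow> 3) set \<Rightarrow> (nat \<Rightarrow> 3) set" where
  "vanishing_on S C = {x\<in>C. \<forall>k\<in>S. x k = 0}"

definition information_set :: "nat \<Rightarrow> (nat \<Rightarrow> 3) set \<Rightarrow> nat set \<Rightarrow> bool" where
  "information_set n C S \<longleftrightarrow>
     S \<subseteq> {..<n} \<and> projects_onto S C \<and> vanishing_on S C = {\<lambda>_. 0}"

lemma projects_ontoD: "projects_onto S C \<Longrightarrow> \<exists>x\<in>C. \<forall>k\<in>S. x k = v k"
  by (simp add: projects_onto_def)

lemma words_eq_words_on: "words n = words_on {..<n}"
  by (auto simp: words_def words_on_def)

lemma bij_betw_words_on_PiE:
  "bij_betw (\<lambda>x. restrict x S) (words_on S) (PiE S (\<lambda>_. UNIV))"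
proof (rule bij_betw_byWitness[where f' = "\<lambda>f k. if k \<in> S then f k else 0"])
  show "\<forall>f\<in>PiE S (\<lambda>_. UNIV). restrict (\<lambda>k. if k \<in> S then f k else 0) S = f"
    by (auto simp: PiE_iff extensional_def fun_eq_iff)
qed (auto simp: words_on_def fun_eq_iff)

lemma
  assumes "finite S"
  shows finite_words_on: "finite (words_on S)"
    and card_words_on: "card (words_on S) = 3 ^ card S"
  using bij_betw_finite[OF bij_betw_words_on_PiE] bij_betw_same_card[OF bij_betw_words_on_PiE]
    assms by (simp_all add: finite_PiE card_PiE)

lemma inner3_words_on:
  assumes "S \<subseteq> {..<n}" "y \<in> words_on S"
  shows "inner3 n x y = (\<Sum>k\<in>S. x k * y k)"
  unfolding inner3_def using assms by (intro sum.mono_neutral_right) (auto simp: words_on_def)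

lemma wt_words_on_le:
  assumes "finite S" "y \<in> words_on S"
  shows "wt n y \<le> card S"
  unfolding wt_def using assms by (intro card_mono) (auto simp: words_on_def)

lemma wt_le: "wt n x \<le> n"
  unfolding wt_def by (rule order.trans[OF card_mono[of "{..<n}"]]) auto

lemma wt_eq_0_iff:
  assumes "x \<in> words n"
  shows "wt n x = 0 \<longleftrightarrow> x = (\<lambda>_. 0)"
  using assms by (auto simp: wt_def words_def fun_eq_iff not_less)

lemma card_zero_coords: "card {k. k < n \<and> x k = 0} = n - wt n x"
proof -
  have "{k. k < n \<and> x k = 0} = {..<n} - {k. k < n \<and> x k \<noteq> 0}" by auto
  then show ?thesis unfolding wt_def by (simp add: card_Diff_subset subset_eq)
qed

lemma min_weight_le_wt:
  "finite C \<Longrightarrow> x \<in> C \<Longrightarrow> x \<noteq> (\<lambda>_. 0) \<Longrightarrow> min_weight n C \<le> wt n x"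
  unfolding min_weight_def by (intro Min_le) auto

lemma sum_by_weight:
  assumes "finite C" and "finite W" and "wt n ` C \<subseteq> W"
  shows "(\<Sum>x\<in>C. g (wt n x)) = (\<Sum>w\<in>W. weight_count n C w * g w)"
proof -
  have "(\<Sum>x\<in>C. g (wt n x)) = (\<Sum>w\<in>W. \<Sum>x\<in>{x\<in>C. wt n x = w}. g (wt n x))"
    using assms by (intro sum.group[symmetric]) auto
  then show ?thesis by (simp add: weight_count_def)
qed

locale ternary_linear_code =
  fixes n :: nat and C :: "(nat \<Rightarrow> 3) set"
  assumes code: "ternary_code n C"
begin

lemma zero_mem: "(\<lambda>_. 0) \<in> C"
  using code by (simp add: ternary_code_def)

lemma add_mem: "x \<in> C \<Longrightarrow> y \<in> C \<Longrightarrow> (\<lambda>k. x k + y k) \<in> C"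
  using code by (simp add: ternary_code_def)

lemma smult_mem: "x \<in> C \<Longrightarrow> (\<lambda>k. a * x k) \<in> C"
  using code by (simp add: ternary_code_def)

lemma diff_mem: "x \<in> C \<Longrightarrow> y \<in> C \<Longrightarrow> (\<lambda>k. x k - y k) \<in> C"
  using add_mem[OF _ smult_mem[of y "-1"], of x] by simp

lemma sum_mem: "finite I \<Longrightarrow> (\<And>i. i \<in> I \<Longrightarrow> f i \<in> C) \<Longrightarrow> (\<lambda>k. \<Sum>i\<in>I. f i k) \<in> C"
proof (induction I rule: finite_induct)
  case empty
  then show ?case using zero_mem by simp
next
  case (insert a I)
  then have "(\<lambda>k. f a k + (\<Sum>i\<in>I. f i k)) \<in> C"
    by (intro add_mem) auto
  with insert.hyps show ?case by simp
qed

lemma subset_words: "C \<subseteq> words n"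
  using code by (simp add: ternary_code_def)

lemma finite_code: "finite C"
  using subset_words finite_words_on[of "{..<n}"] finite_subset
  unfolding words_eq_words_on by blast

lemma weight_count_0: "weight_count n C 0 = 1"
proof -
  have "{x\<in>C. wt n x = 0} = {\<lambda>_. 0}"
    using zero_mem subset_words by (auto simp: wt_eq_0_iff subset_eq)
  then show ?thesis by (simp add: weight_count_def)
qed

lemma projects_onto_empty: "projects_onto {} C"
  using zero_mem by (auto simp: projects_onto_def)

lemma projects_onto_insert:
  assumes "projects_onto S C" and "x0 \<in> vanishing_on S C" and "x0 a \<noteq> 0"
  shows "projects_onto (insert a S) C"
  unfolding projects_onto_def
proof
  fix v
  obtain x where x: "x \<in> C" "\<forall>k\<in>S. x k = v k"
    using assms(1) by (auto simp: projects_onto_def)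
  define c where "c = (v a - x a) * x0 a"
  have "c * x0 a = v a - x a"
    using F3_square_nonzero[OF assms(3)] by (simp add: c_def mult.assoc)
  moreover have "(\<lambda>k. x k + c * x0 k) \<in> C"
    using assms(2) x(1) by (intro add_mem smult_mem) (auto simp: vanishing_on_def)
  ultimately show "\<exists>y\<in>C. \<forall>k\<in>insert a S. y k = v k"
    using x(2) assms(2) by (intro bexI[of _ "\<lambda>k. x k + c * x0 k"]) (auto simp: vanishing_on_def)
qed

lemma coordinate_linear_on_projection:
  assumes "projects_onto S C" and "finite S"
    and "\<And>x. x \<in> vanishing_on S C \<Longrightarrow> x a = 0"
  obtains c where "\<And>x. x \<in> C \<Longrightarrow> x a = (\<Sum>s\<in>S. x s * c s)"
proof -
  have "\<exists>z\<in>C. \<forall>k\<in>S. z k = (if k = s then 1 else 0)" for s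
    using projects_ontoD[OF assms(1), of "\<lambda>k. if k = s then 1 else 0"] by simp
  then obtain z where z: "\<And>s. z s \<in> C" "\<And>s k. k \<in> S \<Longrightarrow> z s k = (if k = s then 1 else 0)"
    by metis
  show thesis
  proof (rule that[of "\<lambda>s. z s a"])
    fix x assume "x \<in> C"
    define w where "w k = x k - (\<Sum>s\<in>S. x s * z s k)" for k
    have "w \<in> C"
      unfolding w_def using \<open>x \<in> C\<close> z(1) assms(2) by (intro diff_mem sum_mem smult_mem)
    moreover have "w k = 0" if "k \<in> S" for k
      using that assms(2) by (simp add: w_def z(2) if_distrib cong: if_cong)
    ultimately have "w a = 0"
      using assms(3) by (simp add: vanishing_on_def)
    then show "x a = (\<Sum>s\<in>S. x s * z s a)"
      by (simp add: w_def)
  qed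
qed

lemma exists_orthogonal_word:
  assumes "finite S" and "\<not> projects_onto S C"
  shows "\<exists>y\<in>words_on S. y \<noteq> (\<lambda>_. 0) \<and> (\<forall>x\<in>C. (\<Sum>k\<in>S. x k * y k) = 0)"
  using assms
proof (induction S rule: finite_induct)
  case empty
  then show ?case using projects_onto_empty by simp
next
  case (insert a S)
  consider "\<not> projects_onto S C"
    | "projects_onto S C" "\<And>x. x \<in> vanishing_on S C \<Longrightarrow> x a = 0"
    using insert.prems projects_onto_insert by blast
  then show ?case
  proof cases
    case 1
    then obtain y where y: "y \<in> words_on S" "y \<noteq> (\<lambda>_. 0)" "\<forall>x\<in>C. (\<Sum>k\<in>S. x k * y k) = 0"
      using insert.IH by blast
    then have "y a = 0"
      using insert.hyps(2) by (simp add: words_on_def)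
    with y insert.hyps show ?thesis
      by (intro bexI[of _ y]) (auto simp: words_on_def)
  next
    case 2
    then obtain c where c: "\<And>x. x \<in> C \<Longrightarrow> x a = (\<Sum>s\<in>S. x s * c s)"
      using coordinate_linear_on_projection insert.hyps(1) by blast
    define y where "y k = (if k = a then 1 else if k \<in> S then - c k else 0)" for k
    have "(\<Sum>k\<in>insert a S. x k * y k) = 0" if "x \<in> C" for x
    proof -
      have "(\<Sum>k\<in>S. x k * y k) = (\<Sum>k\<in>S. - (x k * c k))"
        using insert.hyps(2) by (intro sum.cong) (auto simp: y_def)
      with c[OF that] insert.hyps show ?thesis by (simp add: y_def sum_negf)
    qed
    moreover have "y \<in> words_on (insert a S)" "y \<noteq> (\<lambda>_. 0)"
      by (auto simp: y_def words_on_def fun_eq_iff)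
    ultimately show ?thesis by blast
  qed
qed

lemma card_eq_projects_onto:
  assumes "projects_onto S C" and "finite S"
  shows "card C = 3 ^ card S * card (vanishing_on S C)"
proof -
  obtain lift where lift: "\<And>v. lift v \<in> C" "\<And>v. \<forall>k\<in>S. lift v k = v k"
    using choice[of "\<lambda>v x. x \<in> C \<and> (\<forall>k\<in>S. x k = v k)"] projects_ontoD[OF assms(1)] by blast
  define r where "r x k = (if k \<in> S then x k else 0)" for x :: "nat \<Rightarrow> 3" and k
  define decompose where "decompose x = (r x, \<lambda>k. x k - lift (r x) k)" for x
  define recompose where "recompose p = (\<lambda>k. lift (fst p) k + snd p k)" for p
  have "bij_betw decompose C (words_on S \<times> vanishing_on S C)"
  proof (rule bij_betw_byWitness[where f' = recompose])
    show "\<forall>x\<in>C. recompose (decompose x) = x"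
      by (simp add: recompose_def decompose_def)
    show "\<forall>p\<in>words_on S \<times> vanishing_on S C. decompose (recompose p) = p"
    proof safe
      fix v w assume "v \<in> words_on S" "w \<in> vanishing_on S C"
      then have "r (recompose (v, w)) = v"
        using lift(2) by (auto simp: r_def recompose_def words_on_def vanishing_on_def fun_eq_iff)
      then show "decompose (recompose (v, w)) = (v, w)"
        by (simp add: decompose_def recompose_def)
    qed
    show "decompose ` C \<subseteq> words_on S \<times> vanishing_on S C"
      using lift by (auto simp: decompose_def r_def words_on_def vanishing_on_def intro: diff_mem)
    show "recompose ` (words_on S \<times> vanishing_on S C) \<subseteq> C"
      using lift(1) by (auto simp: recompose_def vanishing_on_def intro: add_mem)
  qed
  then have "card C = card (words_on S \<times> vanishing_on S C)"
    by (rule bij_betw_same_card)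
  with assms(2) show ?thesis
    by (simp add: card_cartesian_product card_words_on)
qed

lemma card_information_set: "information_set n C S \<Longrightarrow> card C = 3 ^ card S"
  using card_eq_projects_onto[of S] finite_subset[of S "{..<n}"]
  by (simp add: information_set_def)

lemma exists_information_set: "\<exists>S. information_set n C S"
proof -
  obtain S where S: "S \<subseteq> {..<n}" "projects_onto S C"
    and max: "\<And>T. T \<subseteq> {..<n} \<Longrightarrow> projects_onto T C \<Longrightarrow> card T \<le> card S"
    using ex_has_greatest_nat[of "\<lambda>S. S \<subseteq> {..<n} \<and> projects_onto S C" "{}" card "Suc n"]
      projects_onto_empty card_mono[of "{..<n}"] by (auto simp: less_Suc_eq_le)
  have "x = (\<lambda>_. 0)" if "x \<in> vanishing_on S C" for x
  proof (rule ccontr)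
    assume "x \<noteq> (\<lambda>_. 0)"
    then obtain a where "x a \<noteq> 0" by auto
    moreover have "a < n"
      using subset_words that \<open>x a \<noteq> 0\<close> by (auto simp: vanishing_on_def words_def not_less[symmetric])
    ultimately have "card (insert a S) \<le> card S"
      using S that by (intro max projects_onto_insert) auto
    moreover have "a \<notin> S"
      using that \<open>x a \<noteq> 0\<close> by (auto simp: vanishing_on_def)
    ultimately show False
      using finite_subset[OF S(1)] by simp
  qed
  then have "vanishing_on S C = {\<lambda>_. 0}"
    using zero_mem by (auto simp: vanishing_on_def)
  with S show ?thesis by (auto simp: information_set_def)
qed

end

section \<open>Self-dual ternary codes\<close>

locale ternary_self_dual_code = ternary_linear_code +
  assumes dual_code_eq: "dual_code n C = C"
begin

lemma inner3_eq_0: "x \<in> C \<Longrightarrow> y \<in> C \<Longrightarrow> inner3 n x y = 0"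
  using dual_code_eq by (auto simp: dual_code_def)

lemma mem_if_orthogonal: "y \<in> words n \<Longrightarrow> (\<And>x. x \<in> C \<Longrightarrow> inner3 n x y = 0) \<Longrightarrow> y \<in> C"
  using dual_code_eq by (auto simp: dual_code_def)

lemma codeword_on_if_not_projects_onto:
  assumes "S \<subseteq> {..<n}" and "\<not> projects_onto S C"
  obtains y where "y \<in> C" "y \<in> words_on S" "y \<noteq> (\<lambda>_. 0)"
proof -
  obtain y where y: "y \<in> words_on S" "y \<noteq> (\<lambda>_. 0)" "\<forall>x\<in>C. (\<Sum>k\<in>S. x k * y k) = 0"
    using exists_orthogonal_word[OF finite_subset[OF assms(1)] assms(2)] by blast
  have "y \<in> C"
    using y assms(1) by (intro mem_if_orthogonal) (auto simp: inner3_words_on words_def words_on_def)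
  with y show thesis by (intro that)
qed

lemma information_set_complement:
  assumes "information_set n C S"
  shows "information_set n C ({..<n} - S)"
proof -
  have S: "S \<subseteq> {..<n}" "projects_onto S C" "vanishing_on S C = {\<lambda>_. 0}"
    using assms by (auto simp: information_set_def)
  have "projects_onto ({..<n} - S) C"
  proof (rule ccontr)
    assume "\<not> projects_onto ({..<n} - S) C"
    then obtain y where "y \<in> C" "y \<in> words_on ({..<n} - S)" "y \<noteq> (\<lambda>_. 0)"
      using codeword_on_if_not_projects_onto[of "{..<n} - S"] by blast
    then have "y \<in> vanishing_on S C" "y \<noteq> (\<lambda>_. 0)"
      by (auto simp: vanishing_on_def words_on_def)
    with S(3) show False by simp
  qed
  moreover have "x = (\<lambda>_. 0)" if x: "x \<in> vanishing_on ({..<n} - S) C" for x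
  proof -
    have "x \<in> words_on S"
      using x subset_words by (auto simp: vanishing_on_def words_on_def words_def not_less[symmetric])
    have "x s = 0" if "s \<in> S" for s
    proof -
      obtain z where z: "z \<in> C" "\<forall>k\<in>S. z k = (if k = s then 1 else 0)"
        using projects_ontoD[OF S(2), of "\<lambda>k. if k = s then 1 else 0"] by blast
      have "0 = inner3 n z x"
        using inner3_eq_0 z(1) x by (simp add: vanishing_on_def)
      also have "\<dots> = (\<Sum>k\<in>S. z k * x k)"
        using S(1) \<open>x \<in> words_on S\<close> by (rule inner3_words_on)
      also have "\<dots> = (\<Sum>k\<in>S. if k = s then x k else 0)"
        using z(2) by (intro sum.cong) auto
      also have "\<dots> = x s"
        using \<open>s \<in> S\<close> finite_subset[OF S(1)] by simp
      finally show ?thesis by simp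
    qed
    with \<open>x \<in> words_on S\<close> show ?thesis
      by (auto simp: words_on_def fun_eq_iff)
  qed
  ultimately show ?thesis
    using zero_mem by (auto simp: information_set_def vanishing_on_def)
qed

lemma card_code: "card C = 3 ^ (n div 2)"
proof -
  obtain S where S: "information_set n C S"
    using exists_information_set by blast
  then have "card C = 3 ^ card S" "card C = 3 ^ card ({..<n} - S)"
    using card_information_set information_set_complement by blast+
  moreover have "card ({..<n} - S) = n - card S" "card S \<le> n"
    using S card_mono[of "{..<n}" S] by (auto simp: information_set_def card_Diff_subset finite_subset)
  ultimately show ?thesis by simp
qed

lemma three_dvd_wt: "x \<in> C \<Longrightarrow> 3 dvd wt n x"
proof -
  assume "x \<in> C"
  have "0 = inner3 n x x"
    using inner3_eq_0[OF \<open>x \<in> C\<close> \<open>x \<in> C\<close>] by simp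
  also have "\<dots> = (\<Sum>k\<in>{k\<in>{..<n}. x k \<noteq> 0}. 1)"
    unfolding inner3_def by (subst sum.inter_filter) (auto simp: F3_square_nonzero intro: sum.cong)
  also have "\<dots> = of_nat (wt n x)"
    by (simp add: wt_def conj_commute)
  finally show ?thesis
    by (simp add: of_nat_eq_0_iff_char_dvd)
qed

lemma projects_onto_if_card_less_min_weight:
  assumes "S \<subseteq> {..<n}" and "card S < min_weight n C"
  shows "projects_onto S C"
proof (rule ccontr)
  assume "\<not> projects_onto S C"
  then obtain y where y: "y \<in> C" "y \<in> words_on S" "y \<noteq> (\<lambda>_. 0)"
    using codeword_on_if_not_projects_onto[OF assms(1)] by blast
  then have "min_weight n C \<le> wt n y"
    using finite_code by (intro min_weight_le_wt)
  moreover have "wt n y \<le> card S"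
    using y(2) finite_subset[OF assms(1)] by (intro wt_words_on_le) auto
  ultimately show False using assms(2) by simp
qed

lemma card_vanishing_on_if_card_less_min_weight:
  assumes "S \<subseteq> {..<n}" and "card S < min_weight n C"
  shows "card (vanishing_on S C) = 3 ^ (n div 2 - card S)"
proof -
  have eq: "3 ^ (n div 2) = 3 ^ card S * card (vanishing_on S C)"
    using card_eq_projects_onto projects_onto_if_card_less_min_weight[OF assms] finite_subset[OF assms(1)]
    by (simp add: card_code)
  moreover have "card (vanishing_on S C) \<noteq> 0"
    using zero_mem finite_code by (auto simp: vanishing_on_def)
  ultimately have "3 ^ card S \<le> (3::nat) ^ (n div 2)"
    by simp
  then have "3 ^ (n div 2) = 3 ^ card S * (3::nat) ^ (n div 2 - card S)"
    by (simp flip: power_add)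
  with eq show ?thesis
    by simp
qed

lemma sum_choose_zero_coords:
  assumes "v < min_weight n C"
  shows "(\<Sum>x\<in>C. (n - wt n x) choose v) = (n choose v) * 3 ^ (n div 2 - v)"
proof -
  define P where "P = {S. S \<subseteq> {..<n} \<and> card S = v}"
  have "finite P"
    unfolding P_def by (rule finite_subset[of _ "Pow {..<n}"]) auto
  have "(n - wt n x) choose v = card {S\<in>P. x \<in> vanishing_on S C}" if "x \<in> C" for x
  proof -
    have "{S\<in>P. x \<in> vanishing_on S C} = {S. S \<subseteq> {k. k < n \<and> x k = 0} \<and> card S = v}"
      using that by (auto simp: P_def vanishing_on_def)
    then show ?thesis by (simp add: n_subsets card_zero_coords)
  qed
  then have "(\<Sum>x\<in>C. (n - wt n x) choose v) = (\<Sum>x\<in>C. \<Sum>S\<in>P. if x \<in> vanishing_on S C then 1 else 0)"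
    using \<open>finite P\<close> by (simp flip: sum.inter_filter)
  also have "\<dots> = (\<Sum>S\<in>P. card (vanishing_on S C))"
    using finite_code by (subst sum.swap) (simp flip: sum.inter_filter add: vanishing_on_def)
  also have "\<dots> = (\<Sum>S\<in>P. 3 ^ (n div 2 - v))"
    using assms by (intro sum.cong) (auto simp: P_def card_vanishing_on_if_card_less_min_weight)
  also have "\<dots> = (n choose v) * 3 ^ (n div 2 - v)"
    by (simp add: P_def n_subsets)
  finally show ?thesis .
qed

end

section \<open>Binomial coefficients modulo 8\<close>

lemma dvd_choose_if_coprime:
  assumes "k dvd n" and "coprime k v"
  shows "k dvd (n choose v)"
proof (cases "v = 0")
  case True
  with assms(2) show ?thesis by simp
next
  case False
  then have "v * (n choose v) = n * (n - 1 choose (v - 1))"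
    by (simp add: times_binomial_minus1_eq)
  then have "k dvd v * (n choose v)"
    using assms(1) by simp
  with assms(2) show ?thesis
    by (simp add: coprime_dvd_mult_right_iff)
qed

lemma eight_dvd_choose_mult_pow3_minus_1:
  fixes n v :: nat
  assumes "4 dvd n"
  shows "8 dvd (n choose v) * (3 ^ (n div 2 - v) - 1)"
proof (cases "even v")
  case True
  obtain a b where "n = 4 * a" "v = 2 * b"
    using assms(1) True by (elim dvdE evenE)
  then have e: "n div 2 - v = 2 * (a - b)"
    by simp
  have "(9::nat) ^ (a - b) mod 8 = (9 mod 8) ^ (a - b) mod 8"
    by (simp only: power_mod)
  then have "8 dvd (9::nat) ^ (a - b) - 1"
    using dvd_minus_mod[of 8 "(9::nat) ^ (a - b)"] by simp
  then show ?thesis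
    by (simp add: e power_mult)
next
  case False
  then have "coprime ((2::nat) ^ 2) v"
    by (subst coprime_power_left_iff) simp
  then have "4 dvd (n choose v)"
    using assms(1) by (intro dvd_choose_if_coprime) simp_all
  moreover have "2 dvd (3::nat) ^ (n div 2 - v) - 1"
    by simp
  ultimately have "4 * 2 dvd (n choose v) * (3 ^ (n div 2 - v) - 1)"
    by (rule mult_dvd_mono)
  then show ?thesis
    by simp
qed

lemma triangular_system_trivial:
  fixes a :: "'i \<Rightarrow> 'i \<Rightarrow> 'a::comm_ring_1" and r :: "'i \<Rightarrow> nat"
  assumes "finite I" and "inj_on r I"
    and triangular: "\<And>i j. i \<in> I \<Longrightarrow> j \<in> I \<Longrightarrow> r j < r i \<Longrightarrow> a i j = 0"
    and diagonal: "\<And>i. i \<in> I \<Longrightarrow> a i i dvd 1"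
    and system: "\<And>j. j \<in> I \<Longrightarrow> (\<Sum>i\<in>I. q i * a i j) = 0"
    and "j \<in> I"
  shows "q j = 0"
  using \<open>j \<in> I\<close>
proof (induction "r j" arbitrary: j rule: less_induct)
  case less
  have "(\<Sum>i\<in>I. q i * a i j) = (\<Sum>i\<in>I. if i = j then q j * a j j else 0)"
  proof (rule sum.cong[OF refl])
    fix i assume "i \<in> I"
    consider "r i < r j" | "r j < r i" | "i = j"
      using \<open>inj_on r I\<close> \<open>i \<in> I\<close> less.prems by (metis inj_on_eq_iff linorder_neqE_nat)
    then show "q i * a i j = (if i = j then q j * a j j else 0)"
      by cases (use less.hyps \<open>i \<in> I\<close> less.prems triangular in auto)
  qed
  then have "q j * a j j = 0"
    using system[OF less.prems] \<open>finite I\<close> less.prems by simp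
  show "q j = 0"
  proof -
    obtain w where "1 = a j j * w" using diagonal[OF less.prems] by (elim dvdE)
    then have "q j = q j * a j j * w" by (simp add: mult.assoc)
    with \<open>q j * a j j = 0\<close> show ?thesis by simp
  qed
qed

lemma coeff_one_plus_X_power:
  "coeff ([:1, 1:] ^ n :: 'a::comm_semiring_1 poly) i = of_nat (n choose i)"
proof (cases "i \<le> n")
  case True
  then show ?thesis by (simp add: coeff_linear_poly_power)
next
  case False
  have "degree ([:1, 1:] ^ n :: 'a poly) \<le> n"
    by (rule order.trans[OF degree_power_le]) simp
  with False show ?thesis by (simp add: coeff_eq_0 binomial_eq_0)
qed

lemma one_plus_X_power_minus_one:
  obtains P :: "'a::comm_ring_1 poly"
  where "[:1, 1:] ^ k - 1 = pCons 0 P" and "coeff P 0 = of_nat k"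
proof -
  obtain c P where cP: "[:1, 1:] ^ k - 1 = (pCons c P :: 'a poly)"
    by (rule pCons_cases)
  have "c = 0"
    using arg_cong[OF cP, of "\<lambda>p. coeff p 0"] by (simp add: coeff_one_plus_X_power)
  moreover have "coeff P 0 = of_nat k"
    using arg_cong[OF cP, of "\<lambda>p. coeff p 1"] by (simp add: coeff_one_plus_X_power)
  ultimately show thesis
    using cP by (intro that) simp_all
qed

lemma coeff_pCons_0_power:
  "coeff (pCons 0 P ^ j) v = (if v < j then 0 else coeff (P ^ j) (v - j))"
proof -
  have "pCons 0 P ^ j = monom 1 j * P ^ j"
    unfolding monom_altdef by (simp flip: power_mult_distrib)
  then show ?thesis by (simp add: coeff_monom_mult)
qed

lemma of_nat_choose_mult_eq_sum:
  "(of_nat (k * t choose v) :: 'a::comm_ring_1) =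
     (\<Sum>j\<le>t. of_nat (t choose j) * coeff (([:1, 1:] ^ k - 1) ^ j) v)"
proof -
  have "(of_nat (k * t choose v) :: 'a) = coeff ((([:1, 1:] ^ k - 1) + 1) ^ t) v"
    by (simp only: diff_add_cancel flip: power_mult) (simp add: coeff_one_plus_X_power)
  also have "\<dots> = coeff (\<Sum>j\<le>t. of_nat (t choose j) * ([:1, 1:] ^ k - 1) ^ j * 1 ^ (t - j)) v"
    by (subst binomial_ring) (rule refl)
  also have "\<dots> = (\<Sum>j\<le>t. of_nat (t choose j) * coeff (([:1, 1:] ^ k - 1) ^ j) v)"
    by (simp add: coeff_sum of_nat_poly)
  finally show ?thesis .
qed

lemma choose_mult_system_trivial:
  fixes u :: "nat \<Rightarrow> 'a::comm_ring_1"
  assumes unit: "of_nat k dvd (1::'a)"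
    and system: "\<And>v. v < N \<Longrightarrow> (\<Sum>t<N. u t * of_nat (k * t choose v)) = 0"
    and "t < N"
  shows "u t = 0"
proof -
  \<comment> \<open>(1 + X)^(k t) = (1 + X P)^t with P(0) = k, so the matrix of the binomials (k t choose v)
    factors through the coefficients e j v of (X P)^j, which vanish below the diagonal v = j.\<close>
  obtain P :: "'a poly" where P: "[:1, 1:] ^ k - 1 = pCons 0 P" "coeff P 0 = of_nat k"
    by (rule one_plus_X_power_minus_one)
  define e where "e j v = coeff (([:1, 1:] ^ k - 1) ^ j :: 'a poly) v" for j v
  define q where "q j = (\<Sum>t<N. u t * of_nat (t choose j))" for j
  have e_system: "(\<Sum>j<N. q j * e j v) = 0" if "v < N" for v
  proof -
    have expand: "(\<Sum>j<N. of_nat (t choose j) * e j v) = of_nat (k * t choose v)"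
      if "t < N" for t
    proof -
      have "(\<Sum>j<N. of_nat (t choose j) * e j v) = (\<Sum>j\<le>t. of_nat (t choose j) * e j v)"
        using that by (intro sum.mono_neutral_right) (auto simp: binomial_eq_0)
      then show ?thesis by (simp add: e_def of_nat_choose_mult_eq_sum)
    qed
    have "(\<Sum>j<N. q j * e j v) = (\<Sum>t<N. u t * (\<Sum>j<N. of_nat (t choose j) * e j v))"
      unfolding q_def sum_distrib_right sum_distrib_left mult.assoc by (rule sum.swap)
    also have "\<dots> = (\<Sum>t<N. u t * of_nat (k * t choose v))"
      using expand by simp
    also have "\<dots> = 0"
      using system[OF that] .
    finally show ?thesis .
  qed
  have e_below: "e j v = 0" if "v < j" for j v
    using that by (simp add: e_def P coeff_pCons_0_power)
  have e_diagonal: "e j j dvd 1" for j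
    using dvd_power_same[OF unit, of j] by (simp add: e_def P coeff_pCons_0_power coeff_0_power)
  have q_eq_0: "q j = 0" if "j < N" for j
    using triangular_system_trivial[of "{..<N}" id e q j] e_system e_below e_diagonal that
    by auto
  have "inj_on (\<lambda>t. N - t) {..<N}"
    by (rule inj_onI) auto
  then show "u t = 0"
    using triangular_system_trivial[of "{..<N}" "\<lambda>t. N - t" "\<lambda>t j. of_nat (t choose j)" u t]
      q_eq_0 \<open>t < N\<close> by (auto simp: binomial_eq_0 q_def)
qed

section \<open>Extremal codes of length 12m\<close>

lemma extremal_self_dual_code: "extremal n C \<Longrightarrow> ternary_self_dual_code n C"
  by unfold_locales (auto simp: extremal_def self_dual_def)

lemma extremal_weight_cases:
  assumes "extremal (12 * m) C" and "x \<in> C" and "x \<noteq> (\<lambda>_. 0)"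
  obtains t where "t < 3 * m" and "wt (12 * m) x = 12 * m - 3 * t"
proof -
  interpret ternary_self_dual_code "12 * m" C
    using assms(1) by (rule extremal_self_dual_code)
  have "3 * m + 3 \<le> wt (12 * m) x"
    using min_weight_le_wt[OF finite_code assms(2,3), of "12 * m"] assms(1)
    by (simp add: extremal_def)
  moreover obtain i where "wt (12 * m) x = 3 * i"
    using three_dvd_wt[OF assms(2)] by (elim dvdE)
  moreover have "wt (12 * m) x \<le> 12 * m"
    by (rule wt_le)
  ultimately show thesis
    by (intro that[of "4 * m - i"]) auto
qed

lemma extremal_binomial_moments:
  assumes "extremal (12 * m) C" and "v < 3 * m"
  shows "(\<Sum>t<3 * m. weight_count (12 * m) C (12 * m - 3 * t) * (3 * t choose v)) =
    (12 * m choose v) * (3 ^ (6 * m - v) - 1)"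
proof -
  interpret ternary_self_dual_code "12 * m" C
    using assms(1) by (rule extremal_self_dual_code)
  define W where "W = (\<lambda>t. 12 * m - 3 * t) ` {..<3 * m}"
  have "wt (12 * m) ` C \<subseteq> insert 0 W"
    using extremal_weight_cases[OF assms(1)] by (force simp: W_def wt_def)
  then have "(\<Sum>x\<in>C. (12 * m - wt (12 * m) x) choose v) =
      (\<Sum>w\<in>insert 0 W. weight_count (12 * m) C w * ((12 * m - w) choose v))"
    using finite_code by (intro sum_by_weight) (auto simp: W_def)
  also have "\<dots> = (12 * m choose v) +
      (\<Sum>t<3 * m. weight_count (12 * m) C (12 * m - 3 * t) * (3 * t choose v))"
  proof -
    have "inj_on (\<lambda>t. 12 * m - 3 * t) {..<3 * m}"
      by (rule inj_onI) auto
    moreover have "0 \<notin> W"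
      by (auto simp: W_def)
    ultimately show ?thesis
      by (simp add: W_def weight_count_0 sum.reindex)
  qed
  finally have "(12 * m choose v) +
      (\<Sum>t<3 * m. weight_count (12 * m) C (12 * m - 3 * t) * (3 * t choose v)) =
      (12 * m choose v) * 3 ^ (6 * m - v)"
    using sum_choose_zero_coords[of v] assms by (simp add: extremal_def)
  then show ?thesis
    by (simp add: diff_mult_distrib2)
qed

theorem corollary3p3:
  fixes m :: nat and C :: "(nat \<Rightarrow> 3) set"
  assumes "m > 0"
    and "extremal (12 * m) C"
  shows "\<forall>i \<in> {m+1..4*m}. weight_count (12 * m) C (3 * i) mod 8 = 0"
proof
  \<comment> \<open>Z/8 is the numeral type 8, where 3 is a unit.\<close>
  fix i assume i: "i \<in> {m+1..4*m}"
  define u where "u t = (of_nat (weight_count (12 * m) C (12 * m - 3 * t)) :: 8)" for t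
  have "(\<Sum>t<3 * m. u t * of_nat (3 * t choose v)) = 0" if "v < 3 * m" for v
  proof -
    have "8 dvd (\<Sum>t<3 * m. weight_count (12 * m) C (12 * m - 3 * t) * (3 * t choose v))"
      using extremal_binomial_moments[OF assms(2) that]
        eight_dvd_choose_mult_pow3_minus_1[of "12 * m" v] that by simp
    then show ?thesis
      by (simp add: u_def of_nat_eq_0_iff_char_dvd flip: of_nat_mult of_nat_sum)
  qed
  moreover have "of_nat 3 dvd (1::8)"
    by (rule dvdI[where k = 3]) simp
  ultimately have "u (4 * m - i) = 0"
    using choose_mult_system_trivial[of 3 "3 * m" u "4 * m - i"] i by auto
  moreover have "12 * m - 3 * (4 * m - i) = 3 * i"
    using i by auto
  ultimately show "weight_count (12 * m) C (3 * i) mod 8 = 0"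
    by (simp add: u_def of_nat_eq_0_iff_char_dvd)
qed

end
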